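(* Let $V\subsetneq(\mathbb C^* )^n$ be a proper algebraic subvariety and $\mathcal A=\operatorname{Log}(V)$. Then for a generic direction $u\in S^{n-1}$ (i.e. for all $u$ outside a closed nowhere dense subset of $S^{n-1}$) and every line $\ell=\{p+su: s\in\mathbb R\}\subset\mathbb R^n$ with direction $u$, the intersection $\mathcal A\cap\ell$ is compact.
   Context: $\operatorname{Log}(z_1,\dots,z_n)=(\log|z_1|,\dots,\log|z_n|)$; $\operatorname{Log}(V)$ is the amoeba of $V$. *)

theory Defs
  imports "HOL-Analysis.Analysis"
begin

definition is_mpoly :: "(('n::finite \<Rightarrow> nat) \<Rightarrow> complex) \<Rightarrow> bool" where
  "is_mpoly c \<longleftrightarrow> finite {\<alpha>. c \<alpha> \<noteq> 0}"

definition mpoly_eval :: "(('n::finite \<Rightarrow> nat) \<Rightarrow> complex) \<Rightarrow> complex ^ 'n \<Rightarrow> complex" where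
  "mpoly_eval c z = (\<Sum>\<alpha>\<in>{\<alpha>. c \<alpha> \<noteq> 0}. c \<alpha> * (\<Prod>i\<in>UNIV. (z $ i) ^ (\<alpha> i)))"

definition torus :: "(complex ^ 'n::finite) set" where
  "torus = {z. \<forall>i. z $ i \<noteq> 0}"

definition torus_subvariety :: "(complex ^ 'n::finite) set \<Rightarrow> bool" where
  "torus_subvariety V \<longleftrightarrow>
     (\<exists>P. finite P \<and> (\<forall>p\<in>P. is_mpoly p) \<and> V = {z \<in> torus. \<forall>p\<in>P. mpoly_eval p z = 0})"

definition Log :: "complex ^ 'n::finite \<Rightarrow> real ^ 'n" where
  "Log z = (\<chi> i. ln (cmod (z $ i)))"

definition amoeba :: "(complex ^ 'n::finite) set \<Rightarrow> (real ^ 'n) set" where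
  "amoeba V = Log ` V"

end

theory Submission imports Defs begin

text \<open>Since V is a proper subvariety, some defining polynomial q is not identically zero.
If the direction u is not orthogonal to any difference of two exponents of q, the
pairings of u with the exponents of q are pairwise distinct. On the fibre of Log over
p + s u the monomial with exponent \<alpha> has modulus exp(<\<alpha>,p> + s <\<alpha>,u>), so as s \<rightarrow> \<infinity>
(and likewise as s \<rightarrow> -\<infinity>) a single monomial dominates the others and q has no zero
there. Hence the amoeba meets the line in a bounded set, which is compact because Log is
proper on the torus. The excluded directions form finitely many great spheres.\<close>

lemma sum_nonzero_if_dominant_term:
  fixes f :: "'a \<Rightarrow> 'b::real_normed_vector"
  assumes "finite S" "a \<in> S" "(\<Sum>x\<in>S-{a}. norm (f x)) < norm (f a)"
  shows "sum f S \<noteq> 0"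
proof
  assume "sum f S = 0"
  then have "f a = - (\<Sum>x\<in>S-{a}. f x)"
    using assms(1,2) by (simp add: sum.remove eq_neg_iff_add_eq_0)
  then have "norm (f a) \<le> (\<Sum>x\<in>S-{a}. norm (f x))"
    by (metis norm_minus_cancel norm_sum)
  with assms(3) show False by simp
qed

lemma eventually_exp_sum_less_dominant:
  fixes C a b :: "'a \<Rightarrow> real"
  assumes "finite S" "\<And>\<beta>. \<beta> \<in> S \<Longrightarrow> b \<beta> < b0" "C0 > 0"
  shows "\<forall>\<^sub>F s in at_top. (\<Sum>\<beta>\<in>S. C \<beta> * exp (a \<beta> + s * b \<beta>)) < C0 * exp (a0 + s * b0)"
proof -
  have "((\<lambda>s. \<Sum>\<beta>\<in>S. C \<beta> * exp (a \<beta> - a0) * exp ((b \<beta> - b0) * s)) \<longlongrightarrow> 0) at_top"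
    (is "(?ratio \<longlongrightarrow> 0) _")
  proof (rule tendsto_null_sum)
    fix \<beta> assume "\<beta> \<in> S"
    then have "LIM s at_top. (b \<beta> - b0) * s :> at_bot"
      using assms(2)
      by (intro filterlim_tendsto_neg_mult_at_bot[OF tendsto_const _ filterlim_ident]) auto
    then show "((\<lambda>s. C \<beta> * exp (a \<beta> - a0) * exp ((b \<beta> - b0) * s)) \<longlongrightarrow> 0) at_top"
      by (intro tendsto_mult_right_zero filterlim_compose[OF exp_at_bot])
  qed
  then have "\<forall>\<^sub>F s in at_top. ?ratio s < C0"
    using assms(3) by (rule order_tendstoD(2))
  then show ?thesis
  proof (rule eventually_mono)
    fix s assume "?ratio s < C0"
    then have "exp (a0 + s * b0) * ?ratio s < C0 * exp (a0 + s * b0)"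
      by simp
    moreover have "exp (a0 + s * b0) * ?ratio s = (\<Sum>\<beta>\<in>S. C \<beta> * exp (a \<beta> + s * b \<beta>))"
      by (simp add: sum_distrib_left mult_exp_exp algebra_simps)
    ultimately show "(\<Sum>\<beta>\<in>S. C \<beta> * exp (a \<beta> + s * b \<beta>)) < C0 * exp (a0 + s * b0)"
      by simp
  qed
qed

lemma eventually_dominant_term_sum_nonzero:
  fixes c :: "'a \<Rightarrow> complex" and a b :: "'a \<Rightarrow> real"
  assumes "finite S" "S \<noteq> {}" "\<And>\<alpha>. \<alpha> \<in> S \<Longrightarrow> c \<alpha> \<noteq> 0" "inj_on b S"
  shows "\<forall>\<^sub>F s in at_top. \<forall>Z. (\<forall>\<alpha>\<in>S. cmod (Z \<alpha>) = exp (a \<alpha> + s * b \<alpha>))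
           \<longrightarrow> (\<Sum>\<alpha>\<in>S. c \<alpha> * Z \<alpha>) \<noteq> 0"
proof -
  have "Max (b ` S) \<in> b ` S" using assms(1,2) by simp
  then obtain \<alpha>0 where \<alpha>0: "\<alpha>0 \<in> S" "b \<alpha>0 = Max (b ` S)" by auto
  have "b \<beta> < b \<alpha>0" if "\<beta> \<in> S - {\<alpha>0}" for \<beta>
  proof -
    have "b \<beta> \<le> b \<alpha>0" using \<alpha>0 that assms(1) by simp
    moreover have "b \<beta> \<noteq> b \<alpha>0" using that \<alpha>0(1) assms(4) by (auto dest: inj_onD)
    ultimately show ?thesis by simp
  qed
  then have "\<forall>\<^sub>F s in at_top. (\<Sum>\<beta>\<in>S-{\<alpha>0}. cmod (c \<beta>) * exp (a \<beta> + s * b \<beta>))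
               < cmod (c \<alpha>0) * exp (a \<alpha>0 + s * b \<alpha>0)"
    using assms(1,3) \<alpha>0(1) by (intro eventually_exp_sum_less_dominant) auto
  then show ?thesis
  proof (rule eventually_mono, intro allI impI)
    fix s Z
    assume less: "(\<Sum>\<beta>\<in>S-{\<alpha>0}. cmod (c \<beta>) * exp (a \<beta> + s * b \<beta>))
                    < cmod (c \<alpha>0) * exp (a \<alpha>0 + s * b \<alpha>0)"
      and Z: "\<forall>\<alpha>\<in>S. cmod (Z \<alpha>) = exp (a \<alpha> + s * b \<alpha>)"
    have "(\<Sum>\<beta>\<in>S-{\<alpha>0}. cmod (c \<beta> * Z \<beta>))
        = (\<Sum>\<beta>\<in>S-{\<alpha>0}. cmod (c \<beta>) * exp (a \<beta> + s * b \<beta>))"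
      using Z by (intro sum.cong) (auto simp: norm_mult)
    with less Z \<alpha>0(1) show "(\<Sum>\<alpha>\<in>S. c \<alpha> * Z \<alpha>) \<noteq> 0"
      by (intro sum_nonzero_if_dominant_term[OF assms(1) \<alpha>0(1)]) (simp add: norm_mult)
  qed
qed

definition exponent_vector :: "('n::finite \<Rightarrow> nat) \<Rightarrow> real ^ 'n" where
  "exponent_vector \<alpha> = (\<chi> i. real (\<alpha> i))"

definition exponent_differences :: "('n::finite \<Rightarrow> nat) set \<Rightarrow> (real ^ 'n) set" where
  "exponent_differences S =
     {exponent_vector \<alpha> - exponent_vector \<beta> | \<alpha> \<beta>. \<alpha> \<in> S \<and> \<beta> \<in> S \<and> \<alpha> \<noteq> \<beta>}"

lemma finite_exponent_differences: "finite S \<Longrightarrow> finite (exponent_differences S)"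
proof -
  assume "finite S"
  moreover have "exponent_differences S
      \<subseteq> (\<lambda>(\<alpha>, \<beta>). exponent_vector \<alpha> - exponent_vector \<beta>) ` (S \<times> S)"
    by (auto simp: exponent_differences_def)
  ultimately show ?thesis by (meson finite_SigmaI finite_imageI finite_subset)
qed

lemma zero_notin_exponent_differences: "0 \<notin> exponent_differences S"
  by (auto simp: exponent_differences_def exponent_vector_def vec_eq_iff)

lemma inj_on_inner_exponent_vector:
  assumes "\<And>w. w \<in> exponent_differences S \<Longrightarrow> inner w u \<noteq> 0"
  shows "inj_on (\<lambda>\<alpha>. inner (exponent_vector \<alpha>) u) S"
  using assms by (force simp: inj_on_def exponent_differences_def inner_diff_left)

lemma norm_monomial_eq_exp_inner_Log:
  fixes z :: "complex ^ 'n::finite"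
  assumes "z \<in> torus"
  shows "cmod (\<Prod>i\<in>UNIV. (z $ i) ^ (\<alpha> i)) = exp (inner (exponent_vector \<alpha>) (Log z))"
proof -
  have "cmod (\<Prod>i\<in>UNIV. (z $ i) ^ (\<alpha> i)) = (\<Prod>i\<in>UNIV. cmod (z $ i) ^ (\<alpha> i))"
    by (simp add: prod_norm[symmetric] norm_power)
  also have "\<dots> = (\<Prod>i\<in>UNIV. exp (real (\<alpha> i) * ln (cmod (z $ i))))"
    using assms by (intro prod.cong) (auto simp: torus_def exp_of_nat_mult)
  also have "\<dots> = exp (inner (exponent_vector \<alpha>) (Log z))"
    by (simp add: exp_sum inner_vec_def Log_def exponent_vector_def)
  finally show ?thesis .
qed

lemma eventually_ray_not_in_hypersurface_amoeba:
  fixes q :: "('n::finite \<Rightarrow> nat) \<Rightarrow> complex" and p u :: "real ^ 'n"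
  assumes "is_mpoly q" "q \<noteq> (\<lambda>_. 0)"
    and "inj_on (\<lambda>\<alpha>. inner (exponent_vector \<alpha>) u) {\<alpha>. q \<alpha> \<noteq> 0}"
  shows "\<forall>\<^sub>F s in at_top. p + s *\<^sub>R u \<notin> amoeba {z \<in> torus. mpoly_eval q z = 0}"
proof -
  have "\<forall>\<^sub>F s in at_top. \<forall>Z.
          (\<forall>\<alpha>\<in>{\<alpha>. q \<alpha> \<noteq> 0}.
             cmod (Z \<alpha>) = exp (inner (exponent_vector \<alpha>) p + s * inner (exponent_vector \<alpha>) u))
          \<longrightarrow> (\<Sum>\<alpha>\<in>{\<alpha>. q \<alpha> \<noteq> 0}. q \<alpha> * Z \<alpha>) \<noteq> 0"
    (is "eventually ?dominant _")
    using assms by (intro eventually_dominant_term_sum_nonzero) (auto simp: is_mpoly_def)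
  then show ?thesis
  proof (rule eventually_mono)
    fix s assume dominant: "?dominant s"
    show "p + s *\<^sub>R u \<notin> amoeba {z \<in> torus. mpoly_eval q z = 0}"
    proof
      assume "p + s *\<^sub>R u \<in> amoeba {z \<in> torus. mpoly_eval q z = 0}"
      then obtain z where z: "z \<in> torus" "mpoly_eval q z = 0" "Log z = p + s *\<^sub>R u"
        by (auto simp: amoeba_def)
      have "cmod (\<Prod>i\<in>UNIV. (z $ i) ^ (\<alpha> i))
              = exp (inner (exponent_vector \<alpha>) p + s * inner (exponent_vector \<alpha>) u)" for \<alpha>
        using norm_monomial_eq_exp_inner_Log[OF z(1)] z(3) by (simp add: inner_add_right)
      with dominant z(2) show False by (simp add: mpoly_eval_def)
    qed
  qed
qed

lemma continuous_on_mpoly_eval [continuous_intros]: "continuous_on S (mpoly_eval c)"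
  unfolding mpoly_eval_def by (intro continuous_intros)

lemma continuous_on_Log: "continuous_on torus Log"
  unfolding Log_def torus_def
  by (intro continuous_on_vec_lambda continuous_on_ln continuous_intros) auto

lemma compact_torus_Int_Log_vimage:
  fixes K :: "(real ^ 'n::finite) set"
  assumes "compact K"
  shows "compact (torus \<inter> Log -` K)"
proof -
  obtain R where R: "\<And>x. x \<in> K \<Longrightarrow> norm x \<le> R"
    using compact_imp_bounded[OF assms] by (auto simp: bounded_iff)
  define A where "A = {z::complex ^ 'n. \<forall>i. exp (-R) \<le> cmod (z $ i) \<and> cmod (z $ i) \<le> exp R}"
  have A_torus: "A \<subseteq> torus"
    unfolding A_def torus_def by auto (metis exp_gt_zero norm_zero not_le)
  have "closed A"
    unfolding A_def by (intro closed_Collect_all closed_Collect_conj closed_Collect_le continuous_intros)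
  moreover have "bounded A"
  proof -
    have "norm z \<le> real CARD('n) * exp R" if "z \<in> A" for z
    proof -
      have "norm z \<le> (\<Sum>i\<in>UNIV. cmod (z $ i))"
        unfolding norm_vec_def by (rule L2_set_le_sum) auto
      also have "\<dots> \<le> (\<Sum>i\<in>(UNIV::'n set). exp R)"
        using that by (intro sum_mono) (auto simp: A_def)
      finally show ?thesis by simp
    qed
    then show ?thesis by (auto simp: bounded_iff)
  qed
  moreover have "torus \<inter> Log -` K = A \<inter> Log -` K"
  proof -
    have "z \<in> A" if "z \<in> torus" "Log z \<in> K" for z
      unfolding A_def mem_Collect_eq
    proof
      fix i
      have pos: "cmod (z $ i) > 0" using that(1) by (simp add: torus_def)
      have "\<bar>ln (cmod (z $ i))\<bar> \<le> R"
        using component_le_norm_cart[of "Log z" i] R[OF that(2)] by (simp add: Log_def)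
      then show "exp (-R) \<le> cmod (z $ i) \<and> cmod (z $ i) \<le> exp R"
        using ln_ge_iff[OF pos, of "-R"] ln_le_cancel_iff[OF pos exp_gt_zero, of R]
        by (simp add: abs_le_iff)
    qed
    then show ?thesis using A_torus by blast
  qed
  moreover have "closed (A \<inter> Log -` K)"
    using continuous_on_subset[OF continuous_on_Log A_torus] \<open>closed A\<close> compact_imp_closed[OF assms]
    by (rule continuous_closed_preimage)
  ultimately show ?thesis
    by (metis Int_lower1 bounded_subset compact_eq_bounded_closed)
qed

lemma compact_amoeba_Int:
  fixes Z :: "(complex ^ 'n::finite) set"
  assumes "closed Z" "compact K"
  shows "compact (amoeba (torus \<inter> Z) \<inter> K)"
proof -
  have "amoeba (torus \<inter> Z) \<inter> K = Log ` (Z \<inter> (torus \<inter> Log -` K))"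
    by (auto simp: amoeba_def)
  moreover have "compact (Z \<inter> (torus \<inter> Log -` K))"
    using assms by (intro closed_Int_compact compact_torus_Int_Log_vimage)
  ultimately show ?thesis
    by (metis compact_continuous_image continuous_on_Log continuous_on_subset inf_le2 le_infE)
qed

lemma compact_amoeba_Int_line:
  fixes Z :: "(complex ^ 'n::finite) set"
  assumes "closed Z"
    and "\<forall>\<^sub>F s in at_top. p + s *\<^sub>R u \<notin> amoeba (torus \<inter> Z)"
    and "\<forall>\<^sub>F s in at_top. p + s *\<^sub>R (-u) \<notin> amoeba (torus \<inter> Z)"
  shows "compact (amoeba (torus \<inter> Z) \<inter> {p + s *\<^sub>R u | s. True})"
proof -
  obtain N where N: "\<And>s. s \<ge> N \<Longrightarrow>
      p + s *\<^sub>R u \<notin> amoeba (torus \<inter> Z) \<and> p + s *\<^sub>R (-u) \<notin> amoeba (torus \<inter> Z)"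
    using eventually_conj[OF assms(2,3)] by (auto simp: eventually_at_top_linorder)
  define K where "K = (\<lambda>s. p + s *\<^sub>R u) ` {-N..N}"
  have "amoeba (torus \<inter> Z) \<inter> {p + s *\<^sub>R u | s. True} = amoeba (torus \<inter> Z) \<inter> K"
  proof -
    have "s \<in> {-N..N}" if "p + s *\<^sub>R u \<in> amoeba (torus \<inter> Z)" for s
      using that N[of s] N[of "-s"] by (force simp: not_le[symmetric])
    then show ?thesis by (auto simp: K_def)
  qed
  moreover have "compact K"
    unfolding K_def by (intro compact_continuous_image continuous_intros) auto
  ultimately show ?thesis
    using compact_amoeba_Int[OF assms(1)] by simp
qed

lemma interior_Union_hyperplanes:
  fixes W :: "'a::euclidean_space set"
  assumes "finite W" "0 \<notin> W"
  shows "interior (\<Union>w\<in>W. {x. inner w x = 0}) = {}"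
  using assms
proof (induction rule: finite_induct)
  case (insert w W)
  then have "interior ({x. inner w x = 0} \<union> (\<Union>v\<in>W. {x. inner v x = 0})) = interior {x. inner w x = 0}"
    by (intro interior_closed_Un_empty_interior closed_hyperplane) auto
  with insert show ?case by simp
qed simp

text \<open>A relatively open subset of the sphere inside H pulls back along sgn to an open
subset of H.\<close>

lemma interior_of_sphere_Int_cone:
  fixes H :: "'a::real_normed_vector set"
  assumes "\<And>c x. x \<in> H \<Longrightarrow> c *\<^sub>R x \<in> H" and "interior H = {}"
  shows "top_of_set (sphere 0 1) interior_of (sphere 0 1 \<inter> H) = {}"
  unfolding interior_of_eq_empty
proof (intro allI impI)
  fix U assume "openin (top_of_set (sphere 0 1)) U \<and> U \<subseteq> sphere 0 1 \<inter> H"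
  then obtain G where G: "open G" "U = sphere 0 1 \<inter> G" and "U \<subseteq> H"
    by (auto simp: openin_open)
  have "open (-{0} \<inter> sgn -` G)"
    using \<open>open G\<close> by (intro continuous_open_preimage continuous_intros) auto
  moreover have "-{0} \<inter> sgn -` G \<subseteq> H"
  proof
    fix x assume x: "x \<in> -{0} \<inter> sgn -` G"
    then have "sgn x \<in> U" using G by (simp add: norm_sgn)
    then have "norm x *\<^sub>R sgn x \<in> H" using \<open>U \<subseteq> H\<close> assms(1) by blast
    then show "x \<in> H" using x by (simp add: sgn_div_norm)
  qed
  ultimately have "-{0} \<inter> sgn -` G = {}"
    using assms(2) interior_maximal by blast
  moreover have "U \<subseteq> -{0} \<inter> sgn -` G"
    using G by (auto simp: sgn_div_norm)
  ultimately show "U = {}" by blast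
qed

definition non_generic_directions :: "(('n::finite \<Rightarrow> nat) \<Rightarrow> complex) \<Rightarrow> (real ^ 'n) set" where
  "non_generic_directions q =
     sphere 0 1 \<inter> (\<Union>w\<in>exponent_differences {\<alpha>. q \<alpha> \<noteq> 0}. {u. inner w u = 0})"

lemma closedin_non_generic_directions:
  assumes "is_mpoly q"
  shows "closedin (top_of_set (sphere 0 1)) (non_generic_directions q)"
  unfolding non_generic_directions_def using assms
  by (intro closedin_closed_Int closed_UN ballI closed_hyperplane finite_exponent_differences)
     (simp add: is_mpoly_def)

lemma interior_of_non_generic_directions:
  assumes "is_mpoly q"
  shows "top_of_set (sphere 0 1) interior_of (non_generic_directions q) = {}"
  unfolding non_generic_directions_def using assms
  by (intro interior_of_sphere_Int_cone interior_Union_hyperplanes finite_exponent_differences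
        zero_notin_exponent_differences) (auto simp: is_mpoly_def)

lemma compact_subvariety_amoeba_Int_line:
  fixes P :: "(('n::finite \<Rightarrow> nat) \<Rightarrow> complex) set"
  assumes "is_mpoly q" "q \<noteq> (\<lambda>_. 0)" "q \<in> P"
    and u: "u \<in> sphere 0 1 - non_generic_directions q"
  shows "compact (amoeba (torus \<inter> (\<Inter>f\<in>P. {z. mpoly_eval f z = 0})) \<inter> {p + s *\<^sub>R u | s. True})"
proof -
  let ?V = "torus \<inter> (\<Inter>f\<in>P. {z. mpoly_eval f z = 0})"
  have V_hypersurface: "amoeba ?V \<subseteq> amoeba {z \<in> torus. mpoly_eval q z = 0}"
    using assms(3) by (auto simp: amoeba_def)
  have rays: "\<forall>\<^sub>F s in at_top. p + s *\<^sub>R v \<notin> amoeba ?V" if "v = u \<or> v = -u" for v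
  proof -
    have "inner w v \<noteq> 0" if "w \<in> exponent_differences {\<alpha>. q \<alpha> \<noteq> 0}" for w
      using u that \<open>v = u \<or> v = -u\<close> by (auto simp: non_generic_directions_def)
    then have "\<forall>\<^sub>F s in at_top. p + s *\<^sub>R v \<notin> amoeba {z \<in> torus. mpoly_eval q z = 0}"
      using assms(1,2) by (intro eventually_ray_not_in_hypersurface_amoeba inj_on_inner_exponent_vector)
    then show ?thesis
      by (rule eventually_mono) (use V_hypersurface in blast)
  qed
  have "closed (\<Inter>f\<in>P. {z::complex ^ 'n. mpoly_eval f z = 0})"
    by (intro closed_INT ballI closed_Collect_eq continuous_intros)
  then show ?thesis
    using rays[of u] rays[of "-u"] by (intro compact_amoeba_Int_line) simp_all
qed

theorem mainTheorem4:
  fixes V :: "(complex ^ 'n::finite) set"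
  assumes "torus_subvariety V" and "V \<noteq> torus"
  shows "\<exists>B. B \<subseteq> sphere (0::real^'n) 1
           \<and> closedin (top_of_set (sphere (0::real^'n) 1)) B
           \<and> (top_of_set (sphere (0::real^'n) 1)) interior_of B = {}
           \<and> (\<forall>u \<in> sphere 0 1 - B. \<forall>p::real^'n.
                compact (amoeba V \<inter> {p + s *\<^sub>R u | s. True}))"
proof -
  obtain P where polys: "\<forall>f\<in>P. is_mpoly f"
    and V: "V = torus \<inter> (\<Inter>f\<in>P. {z. mpoly_eval f z = 0})"
    using assms(1) by (auto simp: torus_subvariety_def)
  obtain z q where "z \<in> torus" "q \<in> P" "mpoly_eval q z \<noteq> 0"
    using assms(2) V by auto
  then have q: "q \<in> P" "q \<noteq> (\<lambda>_. 0)" "is_mpoly q"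
    using polys by (auto simp: mpoly_eval_def)
  show ?thesis
  proof (intro exI[of _ "non_generic_directions q"] conjI ballI allI)
    show "non_generic_directions q \<subseteq> sphere 0 1"
      by (simp add: non_generic_directions_def)
    show "closedin (top_of_set (sphere 0 1)) (non_generic_directions q)"
      using q(3) by (rule closedin_non_generic_directions)
    show "top_of_set (sphere 0 1) interior_of (non_generic_directions q) = {}"
      using q(3) by (rule interior_of_non_generic_directions)
  next
    fix u p :: "real ^ 'n"
    assume "u \<in> sphere 0 1 - non_generic_directions q"
    with q show "compact (amoeba V \<inter> {p + s *\<^sub>R u | s. True})"
      unfolding V by (intro compact_subvariety_amoeba_Int_line)
  qed
qed

end
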